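(* Let $M$ be a finite set of graphs such that $M\cap\mathcal{S}=\emptyset$. Then there exists an integer $r\ge3$ such that $\mathcal{S}_r\subseteq \mathrm{SiFree}(M)$.
   Context: All graphs are finite and simple. For graphs $G_1=(V_1,E_1)$, $G_2=(V_2,E_2)$, $G_1\cap G_2=(V_1\cap V_2, E_1\cap E_2)$. For a graph $G=(V,E)$ and an injective map $\alpha$ on $V$, $G^{\alpha}$ has vertex set $\alpha(V)$ and edge set $\{\{\alpha(v),\alpha(w)\}: \{v,w\}\in E\}$. We write $G\xrightarrow{\cap} H$ if $H$ is (isomorphic to) $G^{\alpha_1}\cap\cdots\cap G^{\alpha_k}$ for some $k\ge1$ and injective maps $\alpha_1,\dots,\alpha_k$ on $V(G)$. For a set $M$ of graphs, $\mathrm{SiFree}(M)$ is the class of graphs $G$ such that $G\xrightarrow{\cap}F$ holds for no $F\in M$. $\mathcal{S}$ is the class of forests in which every connected component is a tree with at most three leaves (its members are called tripods). $H_0=K_{1,4}$, and for $k\ge1$, $H_k$ is the graph obtained from two vertex-disjoint copies of the path $P_3$ by joining their middle vertices by a path with $k$ edges (with $k-1$ new internal vertices). For $k\ge3$, $\mathcal{S}_k$ is the class of graphs containing none of $C_3,\dots,C_k,H_0,H_1,\dots,H_k$ as a (not necessarily induced) subgraph. *)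

theory Defs
  imports Main
begin

text \<open>Finite simple graphs with vertices from nat (graphs are considered up to
isomorphism, so the choice of vertex type is immaterial). A graph is a pair (V, E)
with E a set of 2-element subsets of V.\<close>

type_synonym graph = "nat set \<times> nat set set"

definition verts :: "graph \<Rightarrow> nat set" where "verts G = fst G"
definition edges :: "graph \<Rightarrow> nat set set" where "edges G = snd G"

definition is_graph :: "graph \<Rightarrow> bool" where
  "is_graph G \<longleftrightarrow> finite (verts G) \<and>
     (\<forall>e\<in>edges G. \<exists>u v. e = {u, v} \<and> u \<noteq> v \<and> u \<in> verts G \<and> v \<in> verts G)"

definition adj :: "graph \<Rightarrow> nat \<Rightarrow> nat \<Rightarrow> bool" where
  "adj G u v \<longleftrightarrow> {u, v} \<in> edges G \<and> u \<noteq> v"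

definition degree :: "graph \<Rightarrow> nat \<Rightarrow> nat" where
  "degree G v = card {w. adj G v w}"

definition img :: "graph \<Rightarrow> (nat \<Rightarrow> nat) \<Rightarrow> graph" where
  "img G \<alpha> = (\<alpha> ` verts G, (\<lambda>e. \<alpha> ` e) ` edges G)"

definition inter_graphs :: "graph list \<Rightarrow> graph" where
  "inter_graphs gs = ((\<Inter>g\<in>set gs. verts g), (\<Inter>g\<in>set gs. edges g))"

definition isomorphic :: "graph \<Rightarrow> graph \<Rightarrow> bool" where
  "isomorphic G H \<longleftrightarrow> (\<exists>f. bij_betw f (verts G) (verts H) \<and>
     (\<forall>u\<in>verts G. \<forall>v\<in>verts G. {u, v} \<in> edges G \<longleftrightarrow> {f u, f v} \<in> edges H))"

definition inter_to :: "graph \<Rightarrow> graph \<Rightarrow> bool" where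
  "inter_to G H \<longleftrightarrow> (\<exists>\<alpha>s. \<alpha>s \<noteq> [] \<and> (\<forall>\<alpha>\<in>set \<alpha>s. inj_on \<alpha> (verts G)) \<and>
      isomorphic (inter_graphs (map (img G) \<alpha>s)) H)"

definition SiFree :: "graph set \<Rightarrow> graph set" where
  "SiFree M = {G. is_graph G \<and> (\<forall>F\<in>M. \<not> inter_to G F)}"

definition has_cycle :: "graph \<Rightarrow> bool" where
  "has_cycle G \<longleftrightarrow> (\<exists>vs. length vs \<ge> 3 \<and> distinct vs \<and> set vs \<subseteq> verts G \<and>
      (\<forall>i. Suc i < length vs \<longrightarrow> adj G (vs ! i) (vs ! Suc i)) \<and>
      adj G (last vs) (hd vs))"

definition is_forest :: "graph \<Rightarrow> bool" where
  "is_forest G \<longleftrightarrow> is_graph G \<and> \<not> has_cycle G"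

definition component :: "graph \<Rightarrow> nat \<Rightarrow> nat set" where
  "component G v = {w. (adj G)\<^sup>*\<^sup>* v w}"

definition tripod :: "graph \<Rightarrow> bool" where
  "tripod G \<longleftrightarrow> is_forest G \<and>
     (\<forall>v\<in>verts G. card {w \<in> component G v. degree G w = 1} \<le> 3)"

definition contains :: "graph \<Rightarrow> graph \<Rightarrow> bool" where
  "contains G H \<longleftrightarrow> (\<exists>f. inj_on f (verts H) \<and> f ` verts H \<subseteq> verts G \<and>
      (\<forall>u\<in>verts H. \<forall>v\<in>verts H. {u, v} \<in> edges H \<longrightarrow> {f u, f v} \<in> edges G))"

definition cycle_graph :: "nat \<Rightarrow> graph" where
  "cycle_graph n = ({0..<n}, {{i, (i + 1) mod n} | i. i < n})"

definition star4 :: graph where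
  "star4 = ({0..4}, {{0, i} | i. 1 \<le> i \<and> i \<le> 4})"

definition Hgraph :: "nat \<Rightarrow> graph" where
  "Hgraph k = (if k = 0 then star4 else
     ({0..k+4}, {{i, i + 1} | i. i < k} \<union> {{0, k+1}, {0, k+2}, {k, k+3}, {k, k+4}}))"

definition S_class :: "nat \<Rightarrow> graph set" where
  "S_class k = {G. is_graph G \<and> (\<forall>n. 3 \<le> n \<and> n \<le> k \<longrightarrow> \<not> contains G (cycle_graph n)) \<and>
                   (\<forall>j\<le>k. \<not> contains G (Hgraph j))}"

end

theory Submission
  imports Defs
begin

text \<open>If G -cap-> F, then F is a subgraph of G: the intersection is a subgraph of one image
G^\<alpha>, which is a copy of G. A graph F that is not a tripod contains a cycle, or a vertex of
degree at least four (a copy of H_0), or else it has maximum degree three and a component with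
four leaves, and then two distinct vertices of degree three in that component. A shortest path
between these, with two further neighbours at each end, spans some H_k, unless the neighbours
overlap and close a cycle. The cycle or H_k has at most |V(F)| vertices, so every graph in S_r
with r \<ge> |V(F)| for all F \<in> M lies in SiFree M.

The two vertices of degree three come from counting leaves: if every vertex other than r that is
reachable from r has degree at most two, then distinct leaves reachable from r are entered through
distinct neighbours of r, because shortest walks from r can only separate at a vertex of degree
at least three.\<close>

lemma obtain_distinct_list:
  assumes "n \<le> card A"
  obtains xs where "distinct xs" "length xs = n" "set xs \<subseteq> A"
proof -
  obtain T where "T \<subseteq> A" "card T = n" "finite T"
    using obtain_subset_with_card_n[OF assms] .
  moreover obtain xs where "set xs = T" "distinct xs"
    using finite_distinct_list[OF \<open>finite T\<close>] by blast
  ultimately show thesis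
    using that[of xs] distinct_card[of xs] by auto
qed

lemma obtain_last_two:
  assumes "2 \<le> length xs"
  obtains ys u v where "xs = ys @ [u, v]"
proof -
  have "butlast xs \<noteq> []"
    using assms by (cases xs) auto
  then have "xs = butlast (butlast xs) @ [last (butlast xs), last xs]"
    using assms by (metis append_butlast_last_id append.assoc append_Cons append_Nil
        list.size(3) not_numeral_le_zero)
  then show thesis
    by (rule that)
qed

lemma split_common_prefix:
  obtains pre u v xs' ys' where "a # b # xs = pre @ u # v # xs'" "a # b # ys = pre @ u # v # ys'"
    "xs' = [] \<or> ys' = [] \<or> hd xs' \<noteq> hd ys'"
proof -
  obtain ps xs' ys' where "xs = ps @ xs'" "ys = ps @ ys'" "xs' = [] \<or> ys' = [] \<or> hd xs' \<noteq> hd ys'"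
    using longest_common_prefix by blast
  moreover obtain pre u v where "a # b # ps = pre @ [u, v]"
    using obtain_last_two[of "a # b # ps"] by auto
  ultimately show thesis
    using that by (metis append_Cons append_Nil append.assoc)
qed

lemma adj_sym: "adj G u v \<Longrightarrow> adj G v u"
  by (auto simp: adj_def insert_commute)

lemma adj_neq: "adj G u v \<Longrightarrow> u \<noteq> v"
  by (simp add: adj_def)

lemma adj_imp_edge: "adj G u v \<Longrightarrow> {u, v} \<in> edges G"
  by (simp add: adj_def)

lemma adj_imp_verts: "is_graph G \<Longrightarrow> adj G u v \<Longrightarrow> u \<in> verts G \<and> v \<in> verts G"
  unfolding is_graph_def adj_def by (fastforce simp: doubleton_eq_iff)

lemma rtranclp_adj_sym: "(adj G)\<^sup>*\<^sup>* u v \<Longrightarrow> (adj G)\<^sup>*\<^sup>* v u"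
  by (metis adj_sym symp_rtranclp sympD sympI)

lemma edge_subset_verts:
  assumes "is_graph G" "e \<in> edges G"
  shows "e \<subseteq> verts G"
proof -
  obtain u v where "e = {u, v}" "u \<in> verts G" "v \<in> verts G"
    using assms unfolding is_graph_def by blast
  then show ?thesis
    by simp
qed

lemma successively_adj_subset_verts:
  "is_graph G \<Longrightarrow> successively (adj G) xs \<Longrightarrow> 2 \<le> length xs \<Longrightarrow> set xs \<subseteq> verts G"
  by (induction "adj G" xs rule: successively.induct)
    (auto dest: adj_imp_verts length_pos_if_in_set simp: Suc_le_eq)

lemma finite_neighbours:
  assumes "is_graph G"
  shows "finite {w. adj G v w}"
proof (rule finite_subset)
  show "{w. adj G v w} \<subseteq> verts G"
    using adj_imp_verts[OF assms] by blast
qed (use assms in \<open>simp add: is_graph_def\<close>)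

lemma length_le_degree:
  assumes "is_graph G" "distinct ws" "set ws \<subseteq> {w. adj G v w}"
  shows "length ws \<le> degree G v"
  using card_mono[OF finite_neighbours[OF assms(1)] assms(3)] assms(2)
  by (simp add: degree_def distinct_card)

lemma obtain_two_other_neighbours:
  assumes "3 \<le> degree G x"
  obtains as where "distinct as" "length as = 2" "set as \<subseteq> {w. adj G x w} - {z}"
proof -
  have "2 \<le> card ({w. adj G x w} - {z})"
    using diff_card_le_card_Diff[of "{z}" "{w. adj G x w}"] assms unfolding degree_def by simp
  then show thesis
    using obtain_distinct_list that by blast
qed

section \<open>Walks\<close>

definition walk :: "graph \<Rightarrow> nat \<Rightarrow> nat \<Rightarrow> nat list \<Rightarrow> bool" where
  "walk G u v xs \<longleftrightarrow> xs \<noteq> [] \<and> hd xs = u \<and> last xs = v \<and> successively (adj G) xs"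

definition shortest_walk :: "graph \<Rightarrow> nat \<Rightarrow> nat \<Rightarrow> nat list \<Rightarrow> bool" where
  "shortest_walk G u v xs \<longleftrightarrow> walk G u v xs \<and> (\<forall>ys. walk G u v ys \<longrightarrow> length xs \<le> length ys)"

lemma rtranclp_imp_walk: "(adj G)\<^sup>*\<^sup>* u v \<Longrightarrow> \<exists>xs. walk G u v xs"
proof (induction rule: rtranclp_induct)
  case base
  show ?case by (rule exI[of _ "[u]"]) (simp add: walk_def)
next
  case (step v w)
  then obtain xs where "walk G u v xs" by blast
  then have "walk G u w (xs @ [w])"
    using step.hyps(2) by (simp add: walk_def successively_append_iff)
  then show ?case ..
qed

lemma successively_adj_imp_rtranclp:
  "successively (adj G) (u # xs) \<Longrightarrow> x \<in> set (u # xs) \<Longrightarrow> (adj G)\<^sup>*\<^sup>* u x"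
proof (induction xs arbitrary: u)
  case (Cons y ys)
  then show ?case
    by (auto intro: converse_rtranclp_into_rtranclp)
qed simp

lemma walk_imp_rtranclp: "walk G u v xs \<Longrightarrow> x \<in> set xs \<Longrightarrow> (adj G)\<^sup>*\<^sup>* u x"
  unfolding walk_def by (metis list.collapse successively_adj_imp_rtranclp)

lemma walk_first_step:
  assumes "walk G u v xs" "u \<noteq> v"
  obtains w ys where "xs = u # w # ys" "adj G u w"
  using assms unfolding walk_def
  by (cases xs rule: remdups_adj.cases) auto

lemma walk_interior_neighbours:
  assumes "walk G a b (xs @ u # v # w # ys)" "distinct (xs @ u # v # w # ys)"
  shows "adj G v u \<and> adj G v w \<and> u \<noteq> w"
  using assms adj_sym by (auto simp: walk_def successively_append_iff)

lemma walk_rev: "walk G v u (rev xs) \<longleftrightarrow> walk G u v xs"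
proof -
  have "successively (\<lambda>x y. adj G y x) xs \<longleftrightarrow> successively (adj G) xs"
    by (auto intro: successively_mono adj_sym)
  then show ?thesis
    by (auto simp: walk_def hd_rev last_rev)
qed

lemma shortest_walk_rev: "shortest_walk G u v xs \<Longrightarrow> shortest_walk G v u (rev xs)"
  unfolding shortest_walk_def by (metis length_rev walk_rev)

lemma shortest_walk_exists:
  assumes "(adj G)\<^sup>*\<^sup>* u v"
  shows "\<exists>xs. shortest_walk G u v xs"
  using ex_has_least_nat[of "walk G u v" _ length] rtranclp_imp_walk[OF assms]
  unfolding shortest_walk_def by blast

lemma shortest_walk_distinct:
  assumes "shortest_walk G u v xs"
  shows "distinct xs"
proof (rule ccontr)
  assume "\<not> distinct xs"
  then obtain as a bs cs where xs: "xs = as @ [a] @ bs @ [a] @ cs"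
    using not_distinct_decomp by blast
  have "walk G u v (as @ [a] @ cs)"
    using assms unfolding shortest_walk_def walk_def xs
    by (simp only: successively_append_iff) (auto simp: last_append hd_append)
  then show False
    using assms unfolding shortest_walk_def xs by fastforce
qed

lemma shortest_walk_no_shortcut:
  assumes "shortest_walk G u v (as @ [a] @ bs @ [b] @ cs)" "adj G a b"
  shows "bs = []"
proof (rule ccontr)
  assume "bs \<noteq> []"
  have "walk G u v (as @ [a] @ [b] @ cs)"
    using assms unfolding shortest_walk_def walk_def
    by (simp only: successively_append_iff) (auto simp: last_append hd_append)
  then show False
    using assms(1) \<open>bs \<noteq> []\<close> unfolding shortest_walk_def by fastforce
qed

lemma shortest_walk_neighbour_of_start:
  assumes sw: "shortest_walk G u v xs" and "adj G u a" "a \<in> set xs"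
  shows "a = xs ! 1"
proof -
  obtain ys zs where xs: "xs = ys @ a # zs"
    using split_list[OF \<open>a \<in> set xs\<close>] by blast
  have "ys \<noteq> []"
    using sw adj_neq[OF \<open>adj G u a\<close>] unfolding xs shortest_walk_def walk_def by auto
  then obtain ys' where "ys = u # ys'"
    using sw unfolding xs shortest_walk_def walk_def by (cases ys) auto
  with sw xs have "ys' = []"
    using shortest_walk_no_shortcut[of G u v "[]" u ys' a zs] \<open>adj G u a\<close> by simp
  then show ?thesis
    using xs \<open>ys = u # ys'\<close> by simp
qed

section \<open>Subgraph containment\<close>

lemma contains_by_list:
  assumes "verts H = {0..<length xs}" "distinct xs" "set xs \<subseteq> verts G"
    and "\<And>e. e \<in> edges H \<Longrightarrow> nth xs ` e \<in> edges G"
  shows "contains G H"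
  unfolding contains_def
proof (intro exI[of _ "nth xs"] conjI ballI impI)
  show "inj_on (nth xs) (verts H)"
    using assms(1,2) by (simp add: inj_on_nth)
  show "nth xs ` verts H \<subseteq> verts G"
    using assms(1,3) by auto
next
  fix u v assume "{u, v} \<in> edges H"
  then show "{xs ! u, xs ! v} \<in> edges G"
    using assms(4) by fastforce
qed

lemma contains_trans:
  assumes "contains G F" "contains F H"
  shows "contains G H"
proof -
  obtain f where f: "inj_on f (verts F)" "f ` verts F \<subseteq> verts G"
    "\<forall>u\<in>verts F. \<forall>v\<in>verts F. {u, v} \<in> edges F \<longrightarrow> {f u, f v} \<in> edges G"
    using assms(1) unfolding contains_def by blast
  obtain h where h: "inj_on h (verts H)" "h ` verts H \<subseteq> verts F"
    "\<forall>u\<in>verts H. \<forall>v\<in>verts H. {u, v} \<in> edges H \<longrightarrow> {h u, h v} \<in> edges F"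
    using assms(2) unfolding contains_def by blast
  have "inj_on (f \<circ> h) (verts H)"
    using h(1) inj_on_subset[OF f(1) h(2)] by (rule comp_inj_on)
  moreover have "(f \<circ> h) ` verts H \<subseteq> verts G"
    using f(2) h(2) by auto
  moreover have "\<forall>u\<in>verts H. \<forall>v\<in>verts H. {u, v} \<in> edges H \<longrightarrow> {(f \<circ> h) u, (f \<circ> h) v} \<in> edges G"
    using f(3) h(2,3) by (simp add: image_subset_iff)
  ultimately show ?thesis
    unfolding contains_def by blast
qed

lemma card_verts_le_if_contains:
  assumes "finite (verts G)" "contains G H"
  shows "card (verts H) \<le> card (verts G)"
proof -
  obtain f where "inj_on f (verts H)" "f ` verts H \<subseteq> verts G"
    using assms(2) unfolding contains_def by blast
  then show ?thesis
    using card_inj_on_le assms(1) by blast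
qed

lemma contains_subgraph:
  assumes "verts H \<subseteq> verts G" "edges H \<subseteq> edges G"
  shows "contains G H"
  using assms unfolding contains_def by (intro exI[of _ id]) auto

lemma contains_img:
  assumes g: "is_graph G" and inj: "inj_on \<alpha> (verts G)"
  shows "contains G (img G \<alpha>)"
  unfolding contains_def
proof (intro exI[of _ "inv_into (verts G) \<alpha>"] conjI ballI impI)
  have verts_img: "verts (img G \<alpha>) = \<alpha> ` verts G"
    by (simp add: img_def verts_def)
  show "inj_on (inv_into (verts G) \<alpha>) (verts (img G \<alpha>))"
    unfolding verts_img by (rule inj_on_inv_into) (rule subset_refl)
  show "inv_into (verts G) \<alpha> ` verts (img G \<alpha>) \<subseteq> verts G"
    unfolding verts_img by (auto intro: inv_into_into)
next
  fix u v assume "{u, v} \<in> edges (img G \<alpha>)"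
  then obtain e where e: "e \<in> edges G" "{u, v} = \<alpha> ` e"
    by (auto simp: img_def edges_def)
  have "e \<subseteq> verts G"
    using edge_subset_verts[OF g e(1)] .
  then have "inv_into (verts G) \<alpha> ` {u, v} = e"
    unfolding e(2) by (rule inv_into_image_cancel[OF inj])
  then show "{inv_into (verts G) \<alpha> u, inv_into (verts G) \<alpha> v} \<in> edges G"
    using e(1) by simp
qed

lemma isomorphic_imp_contains:
  assumes "isomorphic H F"
  shows "contains H F"
proof -
  obtain \<phi> where bij: "bij_betw \<phi> (verts H) (verts F)"
    and edges_iff: "\<forall>u\<in>verts H. \<forall>v\<in>verts H. {u, v} \<in> edges H \<longleftrightarrow> {\<phi> u, \<phi> v} \<in> edges F"
    using assms unfolding isomorphic_def by blast
  let ?\<psi> = "inv_into (verts H) \<phi>"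
  have \<psi>: "bij_betw ?\<psi> (verts F) (verts H)"
    using bij by (rule bij_betw_inv_into)
  have "{?\<psi> u, ?\<psi> v} \<in> edges H" if "u \<in> verts F" "v \<in> verts F" "{u, v} \<in> edges F" for u v
    using that edges_iff bij_betw_apply[OF \<psi>] bij_betw_inv_into_right[OF bij] by auto
  then show ?thesis
    unfolding contains_def using \<psi> bij_betw_imp_inj_on bij_betw_imp_surj_on
    by (intro exI[of _ ?\<psi>]) blast
qed

lemma inter_to_imp_contains:
  assumes g: "is_graph G" and "inter_to G F"
  shows "contains G F"
proof -
  obtain \<alpha>s where "\<alpha>s \<noteq> []" and inj: "\<forall>\<alpha>\<in>set \<alpha>s. inj_on \<alpha> (verts G)"
    and iso: "isomorphic (inter_graphs (map (img G) \<alpha>s)) F"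
    using assms(2) unfolding inter_to_def by blast
  then obtain \<alpha> where \<alpha>: "\<alpha> \<in> set \<alpha>s"
    by fastforce
  have "contains (img G \<alpha>) (inter_graphs (map (img G) \<alpha>s))"
    using \<alpha> by (intro contains_subgraph) (auto simp: inter_graphs_def verts_def edges_def)
  moreover have "contains G (img G \<alpha>)"
    using contains_img[OF g] inj \<alpha> by blast
  ultimately show ?thesis
    using contains_trans isomorphic_imp_contains[OF iso] by blast
qed

section \<open>Cycles and H-graphs as subgraphs\<close>

lemma has_cycleI:
  assumes "is_graph G" "3 \<le> length vs" "distinct vs" "successively (adj G) vs"
    and "adj G (last vs) (hd vs)"
  shows "has_cycle G"
  using assms successively_adj_subset_verts[OF assms(1,4)]
  unfolding has_cycle_def successively_conv_nth by auto

lemma has_cycle_contains_cycle_graph: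
  assumes "has_cycle G"
  shows "\<exists>n\<ge>3. contains G (cycle_graph n)"
proof -
  obtain vs where vs: "3 \<le> length vs" "distinct vs" "set vs \<subseteq> verts G"
    "\<forall>i. Suc i < length vs \<longrightarrow> adj G (vs ! i) (vs ! Suc i)" "adj G (last vs) (hd vs)"
    using assms unfolding has_cycle_def by blast
  define n where "n = length vs"
  have "contains G (cycle_graph n)"
  proof (rule contains_by_list[of _ vs])
    fix e assume "e \<in> edges (cycle_graph n)"
    then obtain i where i: "i < n" "e = {i, (i + 1) mod n}"
      by (auto simp: cycle_graph_def edges_def)
    have "adj G (vs ! i) (vs ! ((i + 1) mod n))"
    proof (cases "Suc i < n")
      case True
      then show ?thesis using vs(4) by (simp add: n_def)
    next
      case False
      then have "Suc i = n" using i(1) by simp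
      then have "i = n - 1" "(i + 1) mod n = 0" by auto
      moreover have "vs \<noteq> []"
        using vs(1) by auto
      ultimately show ?thesis
        using vs(5) by (simp add: n_def last_conv_nth hd_conv_nth)
    qed
    then show "nth vs ` e \<in> edges G"
      using i(2) adj_imp_edge by simp
  qed (use vs in \<open>simp_all add: cycle_graph_def verts_def n_def\<close>)
  then show ?thesis
    using vs(1) n_def by blast
qed

lemma degree_ge_4_contains_Hgraph_0:
  assumes g: "is_graph G" and "4 \<le> degree G v"
  shows "contains G (Hgraph 0)"
proof -
  obtain ns where ns: "distinct ns" "length ns = 4" "set ns \<subseteq> {w. adj G v w}"
    using obtain_distinct_list assms(2) unfolding degree_def by metis
  have "v \<in> verts G"
    using ns(2,3) adj_imp_verts[OF g, of v "hd ns"] by (cases ns) auto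
  show ?thesis
  proof (rule contains_by_list[of _ "v # ns"])
    show "verts (Hgraph 0) = {0..<length (v # ns)}"
      using ns(2) by (auto simp: Hgraph_def star4_def verts_def)
    show "distinct (v # ns)"
      using ns(1,3) by (auto dest: adj_neq)
    show "set (v # ns) \<subseteq> verts G"
      using \<open>v \<in> verts G\<close> ns(3) adj_imp_verts[OF g] by auto
  next
    fix e assume "e \<in> edges (Hgraph 0)"
    then obtain i where i: "1 \<le> i" "i \<le> 4" "e = {0, i}"
      by (auto simp: Hgraph_def star4_def edges_def)
    then have "(v # ns) ! i \<in> set ns"
      using ns(2) by (cases i) auto
    then have "adj G v ((v # ns) ! i)"
      using ns(3) by blast
    then show "nth (v # ns) ` e \<in> edges G"
      using i(3) by (simp add: adj_imp_edge)
  qed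
qed

lemma walk_with_pendants_contains_Hgraph:
  assumes g: "is_graph G" and ps: "successively (adj G) ps" "length ps = Suc k" "1 \<le> k"
    and d: "distinct (ps @ as @ bs)" "length as = 2" "length bs = 2"
    and ends: "set as \<subseteq> {w. adj G (hd ps) w}" "set bs \<subseteq> {w. adj G (last ps) w}"
  shows "contains G (Hgraph k)"
proof (rule contains_by_list[of _ "ps @ as @ bs"])
  let ?xs = "ps @ as @ bs"
  show "verts (Hgraph k) = {0..<length ?xs}"
    using ps(2,3) d(2,3) by (auto simp: Hgraph_def verts_def)
  show "distinct ?xs"
    by (rule d(1))
  show "set ?xs \<subseteq> verts G"
    using successively_adj_subset_verts[OF g ps(1)] ps(2,3) ends adj_imp_verts[OF g] by auto
  have "ps \<noteq> []"
    using ps(2) by auto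
  then have nth_xs: "?xs ! 0 = hd ps" "?xs ! k = last ps"
    "?xs ! (k + 1) = as ! 0" "?xs ! (k + 2) = as ! 1"
    "?xs ! (k + 3) = bs ! 0" "?xs ! (k + 4) = bs ! 1"
    using ps(2) d(2) hd_conv_nth[of ps] last_conv_nth[of ps] by (auto simp: nth_append)
  have "as ! 0 \<in> set as" "as ! 1 \<in> set as" "bs ! 0 \<in> set bs" "bs ! 1 \<in> set bs"
    using d(2,3) by simp_all
  then have pendants: "adj G (hd ps) (as ! 0)" "adj G (hd ps) (as ! 1)"
    "adj G (last ps) (bs ! 0)" "adj G (last ps) (bs ! 1)"
    using ends by blast+
  fix e assume "e \<in> edges (Hgraph k)"
  then consider i where "i < k" "e = {i, i + 1}"
    | "e = {0, k + 1}" | "e = {0, k + 2}" | "e = {k, k + 3}" | "e = {k, k + 4}"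
    using ps(3) by (auto simp: Hgraph_def edges_def)
  then show "nth ?xs ` e \<in> edges G"
  proof cases
    case (1 i)
    then have "adj G (?xs ! i) (?xs ! (i + 1))"
      using successively_nth[OF ps(1), of i] ps(2) by (simp add: nth_append)
    then show ?thesis
      using 1(2) adj_imp_edge by simp
  qed (use nth_xs pendants in \<open>simp_all add: adj_imp_edge\<close>)
qed

lemma le_card_verts_Hgraph: "k \<le> card (verts (Hgraph k))"
  by (simp add: Hgraph_def verts_def)

section \<open>Graphs that are not tripods\<close>

lemma shortest_walks_branch:
  assumes g: "is_graph G"
    and P: "shortest_walk G r s P" and Q: "shortest_walk G r s' Q"
    and same_step: "P ! 1 = Q ! 1" and "s \<noteq> s'" "s \<noteq> r" "s' \<noteq> r"
  shows "(\<exists>v. (adj G)\<^sup>*\<^sup>* r v \<and> v \<noteq> r \<and> 3 \<le> degree G v) \<or> 2 \<le> degree G s \<or> 2 \<le> degree G s'"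
proof -
  have wP: "walk G r s P" and wQ: "walk G r s' Q"
    using P Q by (simp_all add: shortest_walk_def)
  have dP: "distinct P" and dQ: "distinct Q"
    using P Q by (simp_all add: shortest_walk_distinct)
  obtain n P1 where P1: "P = r # n # P1"
    using walk_first_step[OF wP] \<open>s \<noteq> r\<close> by metis
  obtain Q1 where Q1: "Q = r # n # Q1"
    using walk_first_step[OF wQ] \<open>s' \<noteq> r\<close> same_step P1 by (metis nth_Cons_0 nth_Cons_Suc One_nat_def)
  obtain pre u v P' Q' where P_eq: "P = pre @ u # v # P'" and Q_eq: "Q = pre @ u # v # Q'"
    and diverge: "P' = [] \<or> Q' = [] \<or> hd P' \<noteq> hd Q'"
    using split_common_prefix[of r n P1 Q1] P1 Q1 by metis
  have "r \<in> set (pre @ [u])"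
    using P1 P_eq by (cases pre) auto
  then have "v \<noteq> r"
    using dP P_eq by auto
  have "(adj G)\<^sup>*\<^sup>* r v"
    using walk_imp_rtranclp[OF wP] P_eq by simp
  consider (end_s) w Q'' where "P' = []" "Q' = w # Q''"
    | (end_s') w P'' where "Q' = []" "P' = w # P''"
    | (fork) w P'' w' Q'' where "P' = w # P''" "Q' = w' # Q''" "w \<noteq> w'"
    using diverge \<open>s \<noteq> s'\<close> wP wQ P_eq Q_eq by (cases P'; cases Q') (auto simp: walk_def)
  then show ?thesis
  proof cases
    case end_s
    then have "s = v" "adj G v u \<and> adj G v w \<and> u \<noteq> w"
      using wP walk_interior_neighbours[of G r s' pre u v w Q''] wQ dQ Q_eq
      by (simp_all add: P_eq walk_def)
    then show ?thesis
      using length_le_degree[OF g, of "[u, w]" v] by auto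
  next
    case end_s'
    then have "s' = v" "adj G v u \<and> adj G v w \<and> u \<noteq> w"
      using wQ walk_interior_neighbours[of G r s pre u v w P''] wP dP P_eq
      by (simp_all add: Q_eq walk_def)
    then show ?thesis
      using length_le_degree[OF g, of "[u, w]" v] by auto
  next
    case fork
    then have "adj G v u \<and> adj G v w \<and> u \<noteq> w" "adj G v w' \<and> u \<noteq> w'"
      using walk_interior_neighbours[of G r s pre u v w P''] wP dP P_eq
        walk_interior_neighbours[of G r s' pre u v w' Q''] wQ dQ Q_eq by simp_all
    then have "3 \<le> degree G v"
      using length_le_degree[OF g, of "[u, w, w']" v] fork(3) by auto
    then show ?thesis
      using \<open>v \<noteq> r\<close> \<open>(adj G)\<^sup>*\<^sup>* r v\<close> by blast
  qed
qed

lemma card_leaves_le_degree: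
  assumes g: "is_graph G"
    and leaves: "\<And>s. s \<in> S \<Longrightarrow> (adj G)\<^sup>*\<^sup>* r s \<and> s \<noteq> r \<and> degree G s \<le> 1"
    and no_branching: "\<And>x. (adj G)\<^sup>*\<^sup>* r x \<Longrightarrow> x \<noteq> r \<Longrightarrow> degree G x \<le> 2"
  shows "card S \<le> degree G r"
proof -
  have "\<forall>s\<in>S. \<exists>P. shortest_walk G r s P"
    using leaves shortest_walk_exists by blast
  then obtain W where W: "\<And>s. s \<in> S \<Longrightarrow> shortest_walk G r s (W s)"
    by metis
  have "inj_on (\<lambda>s. W s ! 1) S"
  proof (rule inj_onI, rule ccontr)
    fix s s' assume s: "s \<in> S" "s' \<in> S" "W s ! 1 = W s' ! 1" "s \<noteq> s'"
    then have "(\<exists>v. (adj G)\<^sup>*\<^sup>* r v \<and> v \<noteq> r \<and> 3 \<le> degree G v) \<or> 2 \<le> degree G s \<or> 2 \<le> degree G s'"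
      using shortest_walks_branch[OF g W[OF s(1)] W[OF s(2)] s(3,4)] leaves by blast
    then show False
    proof (elim disjE exE conjE)
      fix v assume "(adj G)\<^sup>*\<^sup>* r v" "v \<noteq> r" "3 \<le> degree G v"
      then show False
        using no_branching[of v] by simp
    qed (use leaves[OF s(1)] leaves[OF s(2)] in simp_all)
  qed
  moreover have "(\<lambda>s. W s ! 1) ` S \<subseteq> {w. adj G r w}"
  proof clarify
    fix s assume "s \<in> S"
    then have "walk G r s (W s)" "r \<noteq> s"
      using W leaves by (auto simp: shortest_walk_def)
    then obtain w ys where "W s = r # w # ys" "adj G r w"
      by (rule walk_first_step)
    then show "adj G r (W s ! 1)"
      by simp
  qed
  ultimately show ?thesis
    unfolding degree_def using card_inj_on_le finite_neighbours[OF g] by blast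
qed

lemma exists_branch_vertex:
  assumes g: "is_graph G"
    and leaves: "\<And>s. s \<in> S \<Longrightarrow> (adj G)\<^sup>*\<^sup>* r s \<and> s \<noteq> r \<and> degree G s \<le> 1"
    and "degree G r < card S"
  obtains x where "(adj G)\<^sup>*\<^sup>* r x" "x \<noteq> r" "3 \<le> degree G x"
proof -
  have "\<exists>x. (adj G)\<^sup>*\<^sup>* r x \<and> x \<noteq> r \<and> 3 \<le> degree G x"
  proof (rule ccontr)
    assume none: "\<not> ?thesis"
    have "card S \<le> degree G r"
    proof (rule card_leaves_le_degree[OF g leaves])
      fix x assume "(adj G)\<^sup>*\<^sup>* r x" "x \<noteq> r"
      then have "\<not> 3 \<le> degree G x"
        using none by blast
      then show "degree G x \<le> 2"
        by linarith
    qed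
    then show False
      using \<open>degree G r < card S\<close> by simp
  qed
  then show thesis
    using that by blast
qed

lemma two_branch_vertices:
  assumes g: "is_graph G" and max_degree: "\<And>w. degree G w \<le> 3"
    and leaves: "\<And>l. l \<in> L \<Longrightarrow> (adj G)\<^sup>*\<^sup>* v l \<and> degree G l = 1" and "4 \<le> card L"
  obtains x y where "(adj G)\<^sup>*\<^sup>* x y" "x \<noteq> y" "3 \<le> degree G x" "3 \<le> degree G y"
proof -
  have "L \<noteq> {}"
    using \<open>4 \<le> card L\<close> by auto
  then obtain l0 where l0: "l0 \<in> L"
    by blast
  have "(adj G)\<^sup>*\<^sup>* l0 v"
    using rtranclp_adj_sym leaves[OF l0] by blast
  then have from_l0: "(adj G)\<^sup>*\<^sup>* l0 l" if "l \<in> L" for l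
    using rtranclp_trans leaves[OF that] by metis
  obtain x where x: "(adj G)\<^sup>*\<^sup>* l0 x" "x \<noteq> l0" "3 \<le> degree G x"
  proof (rule exists_branch_vertex[OF g, of "L - {l0}"])
    show "degree G l0 < card (L - {l0})"
      using \<open>4 \<le> card L\<close> l0 leaves[OF l0] by simp
  qed (use from_l0 leaves in simp)
  obtain y where "(adj G)\<^sup>*\<^sup>* x y" "y \<noteq> x" "3 \<le> degree G y"
  proof (rule exists_branch_vertex[OF g, of L])
    fix l assume "l \<in> L"
    then show "(adj G)\<^sup>*\<^sup>* x l \<and> l \<noteq> x \<and> degree G l \<le> 1"
      using rtranclp_trans[OF rtranclp_adj_sym[OF x(1)] from_l0[of l]] leaves[of l] x(3)
      by auto
  next
    show "degree G x < card L"
      using \<open>4 \<le> card L\<close> max_degree[of x] by simp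
  qed
  then show thesis
    using that x(3) by blast
qed

lemma branch_vertices_imp_cycle_or_Hgraph:
  assumes g: "is_graph G" and "(adj G)\<^sup>*\<^sup>* x y" "x \<noteq> y"
    and "3 \<le> degree G x" "3 \<le> degree G y"
  shows "has_cycle G \<or> (\<exists>k. contains G (Hgraph k))"
proof -
  obtain P where P: "shortest_walk G x y P"
    using shortest_walk_exists assms(2) by blast
  then have wP: "walk G x y P" and dP: "distinct P"
    by (simp_all add: shortest_walk_def shortest_walk_distinct)
  have P_rev: "shortest_walk G y x (rev P)"
    using P by (rule shortest_walk_rev)
  have "2 \<le> length P"
    using wP \<open>x \<noteq> y\<close> by (cases P rule: remdups_adj.cases) (auto simp: walk_def)
  obtain as where as: "distinct as" "length as = 2" "set as \<subseteq> {w. adj G x w} - {P ! 1}"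
    using obtain_two_other_neighbours[OF assms(4)] .
  obtain bs where bs: "distinct bs" "length bs = 2" "set bs \<subseteq> {w. adj G y w} - {rev P ! 1}"
    using obtain_two_other_neighbours[OF assms(5)] .
  have as_off: "set as \<inter> set P = {}"
    using as(3) shortest_walk_neighbour_of_start[OF P] by blast
  have bs_off: "set bs \<inter> set P = {}"
    using bs(3) shortest_walk_neighbour_of_start[OF P_rev] by fastforce
  show ?thesis
  proof (cases "set as \<inter> set bs = {}")
    case True
    have "contains G (Hgraph (length P - 1))"
      using walk_with_pendants_contains_Hgraph[OF g, of P "length P - 1" as bs]
        wP dP as bs as_off bs_off True \<open>2 \<le> length P\<close>
      by (auto simp: walk_def)
    then show ?thesis
      by blast
  next
    case False
    then obtain c where "c \<in> set as" "c \<in> set bs"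
      by blast
    then have "adj G x c" "adj G y c" "c \<notin> set P"
      using as(3) bs(3) bs_off by auto
    moreover have "P \<noteq> []" "hd P = x" "last P = y" "successively (adj G) P"
      using wP by (simp_all add: walk_def)
    ultimately have "has_cycle G"
      using has_cycleI[OF g, of "P @ [c]"] dP \<open>2 \<le> length P\<close>
      by (simp add: successively_append_iff adj_sym)
    then show ?thesis ..
  qed
qed

lemma not_tripod_contains_cycle_or_Hgraph:
  assumes g: "is_graph F" and "\<not> tripod F"
  shows "(\<exists>n\<ge>3. contains F (cycle_graph n)) \<or> (\<exists>k. contains F (Hgraph k))"
proof (cases "has_cycle F")
  case True
  then show ?thesis
    using has_cycle_contains_cycle_graph by blast
next
  case False
  then obtain v where "\<not> card {w \<in> component F v. degree F w = 1} \<le> 3"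
    using assms unfolding tripod_def is_forest_def by blast
  then have v: "4 \<le> card {w \<in> component F v. degree F w = 1}"
    by simp
  show ?thesis
  proof (cases "\<exists>w. 4 \<le> degree F w")
    case True
    then show ?thesis
      using degree_ge_4_contains_Hgraph_0[OF g] by blast
  next
    case no_star: False
    have "degree F w \<le> 3" for w
    proof -
      have "\<not> 4 \<le> degree F w"
        using no_star by blast
      then show ?thesis
        by linarith
    qed
    then obtain x y where "(adj F)\<^sup>*\<^sup>* x y" "x \<noteq> y" "3 \<le> degree F x" "3 \<le> degree F y"
      by (rule two_branch_vertices[OF g _ _ v]) (auto simp: component_def)
    then show ?thesis
      using branch_vertices_imp_cycle_or_Hgraph[OF g] False by blast
  qed
qed

lemma S_class_not_contains_nontripod:
  assumes G: "G \<in> S_class r" and F: "is_graph F" "\<not> tripod F" "card (verts F) \<le> r"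
  shows "\<not> contains G F"
proof
  assume GF: "contains G F"
  have fin: "finite (verts F)"
    using F(1) by (simp add: is_graph_def)
  consider n where "3 \<le> n" "contains F (cycle_graph n)" | k where "contains F (Hgraph k)"
    using not_tripod_contains_cycle_or_Hgraph[OF F(1,2)] by blast
  then show False
  proof cases
    case (1 n)
    have "n \<le> r"
      using card_verts_le_if_contains[OF fin 1(2)] F(3) by (simp add: cycle_graph_def verts_def)
    then show False
      using G 1 contains_trans[OF GF] unfolding S_class_def by blast
  next
    case (2 k)
    have "k \<le> r"
      using card_verts_le_if_contains[OF fin 2] F(3) le_card_verts_Hgraph[of k] by linarith
    then show False
      using G 2 contains_trans[OF GF] unfolding S_class_def by blast
  qed
qed

theorem mainTheorem12:
  assumes "finite M"
    and "\<forall>F\<in>M. is_graph F"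
    and "\<forall>F\<in>M. \<not> tripod F"
  shows "\<exists>r::nat. r \<ge> 3 \<and> S_class r \<subseteq> SiFree M"
proof (intro exI conjI)
  define r where "r = 3 + (\<Sum>F\<in>M. card (verts F))"
  show "3 \<le> r"
    by (simp add: r_def)
  show "S_class r \<subseteq> SiFree M"
  proof
    fix G assume G: "G \<in> S_class r"
    have "\<not> inter_to G F" if "F \<in> M" for F
    proof
      assume "inter_to G F"
      moreover have "card (verts F) \<le> r"
        using member_le_sum[OF that, of "\<lambda>F. card (verts F)"] assms(1) by (simp add: r_def)
      ultimately show False
        using S_class_not_contains_nontripod[OF G] inter_to_imp_contains assms(2,3) that G
        unfolding S_class_def by blast
    qed
    then show "G \<in> SiFree M"
      using G unfolding S_class_def SiFree_def by blast
  qed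
qed

end
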